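(* Let $(X_m)_{m\in\mathbb Z}$ and $(Y_m)_{m\in\mathbb Z}$ be homogeneous second order recurrence sequences with constant coefficients that possess the same recurrence relation. Let $a,b,c,d,e,m$ be integers with $$\Delta_{xy}:=X_{d-a}Y_{e-b}-X_{e-a}Y_{d-b}\neq 0.$$ Then $$(X_{d-a}Y_{e-b}-X_{e-a}Y_{d-b})X_{m-c}=(X_{d-c}Y_{e-b}-X_{e-c}Y_{d-b})X_{m-a}+(X_{d-a}X_{e-c}-X_{e-a}X_{d-c})Y_{m-b}.$$
   Context: A homogeneous second order recurrence sequence with constant coefficients is a sequence $(X_m)_{m\in\mathbb Z}$ of complex numbers for which there are constants $p,q\in\mathbb C$, $q\neq 0$, with $X_m=pX_{m-1}+qX_{m-2}$ for all $m\in\mathbb Z$. Two such sequences possess the same recurrence relation if they satisfy it with the same constants $p,q$. *)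

theory Defs
  imports Complex_Main
begin

definition sec_ord_rec :: "complex \<Rightarrow> complex \<Rightarrow> (int \<Rightarrow> complex) \<Rightarrow> bool" where
  "sec_ord_rec p q X \<longleftrightarrow> q \<noteq> 0 \<and> (\<forall>m::int. X m = p * X (m - 1) + q * X (m - 2))"

end

theory Submission
  imports Defs
begin

text \<open>Solutions of a fixed recurrence span a space of dimension two: there are coefficients
  s, t, depending only on n, p, q, with Z n = s * Z 0 + t * Z 1 for every solution Z. Hence for
  three solutions U, V, W the 3 \<times> 3 matrix with rows (U k, V k, W k), k = d, e, m, factors
  through a 2-dimensional space, so its determinant vanishes; the claimed identity is the
  expansion of that determinant along the last row.\<close>

lemma sec_ord_rec_shift:
  assumes "sec_ord_rec p q Z"
  shows "sec_ord_rec p q (\<lambda>n. Z (n - k))"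
proof -
  have "Z (n - k) = p * Z (n - 1 - k) + q * Z (n - 2 - k)" for n
    using assms unfolding sec_ord_rec_def by (metis diff_right_commute)
  then show ?thesis
    using assms unfolding sec_ord_rec_def by blast
qed

lemma sec_ord_rec_step:
  assumes "sec_ord_rec p q Z"
  shows "Z (n + 2) = p * Z (n + 1) + q * Z n"
proof -
  have "Z (n + 2) = p * Z (n + 2 - 1) + q * Z (n + 2 - 2)"
    using assms unfolding sec_ord_rec_def by blast
  then show ?thesis
    by (simp add: add_diff_eq[symmetric])
qed

lemma sec_ord_rec_uniform_span:
  "\<exists>s t. \<forall>Z. sec_ord_rec p q Z \<longrightarrow> Z n = s * Z 0 + t * Z 1"
proof -
  define P where "P n \<longleftrightarrow> (\<exists>s t. \<forall>Z. sec_ord_rec p q Z \<longrightarrow> Z n = s * Z 0 + t * Z 1)" for n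
  have up: "P (i + 2)" if "P i" "P (i + 1)" for i
  proof -
    from that obtain s1 t1 s2 t2 where
      h1: "\<And>Z. sec_ord_rec p q Z \<Longrightarrow> Z i = s1 * Z 0 + t1 * Z 1" and
      h2: "\<And>Z. sec_ord_rec p q Z \<Longrightarrow> Z (i + 1) = s2 * Z 0 + t2 * Z 1"
      unfolding P_def by blast
    have "Z (i + 2) = (p * s2 + q * s1) * Z 0 + (p * t2 + q * t1) * Z 1"
      if "sec_ord_rec p q Z" for Z
      using sec_ord_rec_step[OF that, of i] h1[OF that] h2[OF that] by (simp add: algebra_simps)
    then show ?thesis
      unfolding P_def by blast
  qed
  have down: "P (i - 1)" if "P i" "P (i + 1)" for i
  proof -
    from that obtain s1 t1 s2 t2 where
      h1: "\<And>Z. sec_ord_rec p q Z \<Longrightarrow> Z i = s1 * Z 0 + t1 * Z 1" and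
      h2: "\<And>Z. sec_ord_rec p q Z \<Longrightarrow> Z (i + 1) = s2 * Z 0 + t2 * Z 1"
      unfolding P_def by blast
    have "Z (i - 1) = ((s2 - p * s1) / q) * Z 0 + ((t2 - p * t1) / q) * Z 1"
      if "sec_ord_rec p q Z" for Z
    proof -
      have "q \<noteq> 0"
        using that unfolding sec_ord_rec_def by blast
      moreover have "Z (i + 1) = p * Z i + q * Z (i - 1)"
        using sec_ord_rec_step[OF that, of "i - 1"] by (simp add: add.commute)
      ultimately have "q * Z (i - 1) = (s2 - p * s1) * Z 0 + (t2 - p * t1) * Z 1"
        using h1[OF that] h2[OF that] by (simp add: algebra_simps)
      with \<open>q \<noteq> 0\<close> show ?thesis
        by (simp add: add_divide_distrib[symmetric] eq_divide_eq mult.commute)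
    qed
    then show ?thesis
      unfolding P_def by blast
  qed
  have "P n \<and> P (n + 1)"
  proof (induction n rule: int_induct[where k = 0])
    case base
    have "P 0" unfolding P_def by (rule exI[of _ 1], rule exI[of _ 0]) simp
    moreover have "P 1" unfolding P_def by (rule exI[of _ 0], rule exI[of _ 1]) simp
    ultimately show ?case by simp
  next
    case (step1 i)
    then show ?case using up[of i] by (simp add: add.assoc)
  next
    case (step2 i)
    then show ?case using down[of i] by simp
  qed
  then show ?thesis
    unfolding P_def by blast
qed

lemma rank_two_det_expansion:
  fixes u0 u1 v0 v1 w0 w1 s1 t1 s2 t2 s3 t3 :: "'a :: comm_ring"
  shows "((s1*u0+t1*u1) * (s2*v0+t2*v1) - (s2*u0+t2*u1) * (s1*v0+t1*v1)) * (s3*w0+t3*w1)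
   = ((s1*w0+t1*w1) * (s2*v0+t2*v1) - (s2*w0+t2*w1) * (s1*v0+t1*v1)) * (s3*u0+t3*u1)
   + ((s1*u0+t1*u1) * (s2*w0+t2*w1) - (s2*u0+t2*u1) * (s1*w0+t1*w1)) * (s3*v0+t3*v1)"
  by (simp add: algebra_simps)

lemma sec_ord_rec_det_identity:
  assumes U: "sec_ord_rec p q U" and V: "sec_ord_rec p q V" and W: "sec_ord_rec p q W"
  shows "(U d * V e - U e * V d) * W m
       = (W d * V e - W e * V d) * U m + (U d * W e - U e * W d) * V m"
proof -
  obtain s1 t1 s2 t2 s3 t3 where
    d: "\<And>Z. sec_ord_rec p q Z \<Longrightarrow> Z d = s1 * Z 0 + t1 * Z 1" and
    e: "\<And>Z. sec_ord_rec p q Z \<Longrightarrow> Z e = s2 * Z 0 + t2 * Z 1" and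
    m: "\<And>Z. sec_ord_rec p q Z \<Longrightarrow> Z m = s3 * Z 0 + t3 * Z 1"
    using sec_ord_rec_uniform_span by metis
  show ?thesis
    unfolding d[OF U] d[OF V] d[OF W] e[OF U] e[OF V] e[OF W] m[OF U] m[OF V] m[OF W]
    by (rule rank_two_det_expansion)
qed

theorem lemma1:
  fixes X Y :: "int \<Rightarrow> complex" and p q :: complex and a b c d e m :: int
  assumes "sec_ord_rec p q X" and "sec_ord_rec p q Y"
    and "X (d - a) * Y (e - b) - X (e - a) * Y (d - b) \<noteq> 0"
  shows "(X (d - a) * Y (e - b) - X (e - a) * Y (d - b)) * X (m - c) =
         (X (d - c) * Y (e - b) - X (e - c) * Y (d - b)) * X (m - a)
       + (X (d - a) * X (e - c) - X (e - a) * X (d - c)) * Y (m - b)"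
  using sec_ord_rec_det_identity[OF sec_ord_rec_shift[OF assms(1), of a]
      sec_ord_rec_shift[OF assms(2), of b] sec_ord_rec_shift[OF assms(1), of c]] .

end
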